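(* Let $G=(V,E)$ be a finite undirected graph, let $k>2$ be an integer, let $C$ be a configuration, and let $s\in S(C)$ be locally legitimate in $C$ (as defined in the context). Then $\mathcal{B}(s,k-1)\cap S(C)=\{s\}$.
   Context: $\mathrm{dist}$ is the graph distance in $G$, $N(u)$ the neighbourhood of $u$, and $\mathcal{B}(s,r)=\{u\in V:\mathrm{dist}(u,s)\le r\}$. Let $m=\lfloor k/2\rfloor$. A configuration $C$ assigns to each node $u$ the values $d_u\in\{0,\dots,k-1\}$, $err_u\in\{0,1\}$, and for each $i\in\{1,\dots,m-1\}$ a clock value $c_{i,u}\in\mathbb{Z}/4\mathbb{Z}$ and an arrow $b_{i,u}\in\{\uparrow,\downarrow\}$. Let $S(C)=\{u\in V: d_u=0\}$. Clock arithmetic is in $\mathbb{Z}/4\mathbb{Z}$. Predicates on a node $u$: - $\mathrm{well\_defined}(u)$: $err_u=0$, $|d_u-d_v|\le 1$ for all $v\in N(u)$, and if $d_u>0$ then some $v\in N(u)$ has $d_v=d_u-1$. - $\mathrm{leader\_down}(u)$: if $d_u=0$ then $b_{i,u}=\downarrow$ for all $i\in\{1,\dots,m-1\}$. - $\mathrm{bc\_up}(u,i)$: for every $v\in N(u)$ with $d_v=d_u-1$, $(b_{i,u},b_{i,v},c_{i,v})\in\{(\uparrow,\uparrow,c_{i,u}),(\uparrow,\downarrow,c_{i,u}),(\uparrow,\downarrow,c_{i,u}+1),(\downarrow,\downarrow,c_{i,u})\}$. - $\mathrm{bc\_down}(u,i)$: for every $v\in N(u)$ with $d_v=d_u+1$,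 $(b_{i,u},b_{i,v},c_{i,v})\in\{(\uparrow,\uparrow,c_{i,u}),(\downarrow,\uparrow,c_{i,u}),(\downarrow,\uparrow,c_{i,u}-1),(\downarrow,\downarrow,c_{i,u})\}$. - $\mathrm{branch\_coherence}(u)$: either $d_u\ge m$, or ($\mathrm{bc\_up}(u,d_u)$ holds, and $\mathrm{bc\_up}(u,i)$ and $\mathrm{bc\_down}(u,i)$ hold for all $i\in\{d_u+1,\dots,m-1\}$). (For $d_u=0$ the condition $\mathrm{bc\_up}(u,0)$ is vacuous.) A node $s\in S(C)$ is locally legitimate in $C$ if (1) every node $u\in\mathcal{B}(s,m)$ satisfies $\mathrm{well\_defined}(u)$, $\mathrm{leader\_down}(u)$, $\mathrm{branch\_coherence}(u)$ and $d_u=\mathrm{dist}(u,s)$; and (2) every node $u\in\mathcal{B}(s,k-1)\setminus\mathcal{B}(s,m)$ satisfies $k-\mathrm{dist}(u,s)\le d_u\le\mathrm{dist}(u,s)$. *)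

theory Defs
  imports Main "HOL-Library.Numeral_Type"
begin

definition ugraph :: "'a set \<Rightarrow> ('a \<Rightarrow> 'a \<Rightarrow> bool) \<Rightarrow> bool" where
  "ugraph V E \<longleftrightarrow> finite V \<and> (\<forall>u v. E u v \<longrightarrow> u \<in> V \<and> v \<in> V)
     \<and> (\<forall>u v. E u v \<longrightarrow> E v u) \<and> (\<forall>u. \<not> E u u)"

definition nbrs :: "('a \<Rightarrow> 'a \<Rightarrow> bool) \<Rightarrow> 'a \<Rightarrow> 'a set" where
  "nbrs E u = {v. E u v}"

fun walk :: "('a \<Rightarrow> 'a \<Rightarrow> bool) \<Rightarrow> nat \<Rightarrow> 'a \<Rightarrow> 'a \<Rightarrow> bool" where
  "walk E 0 u v = (u = v)"
| "walk E (Suc n) u v = (\<exists>w. E u w \<and> walk E n w v)"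

text \<open>Graph distance (meaningful when v is reachable from u).\<close>
definition gdist :: "('a \<Rightarrow> 'a \<Rightarrow> bool) \<Rightarrow> 'a \<Rightarrow> 'a \<Rightarrow> nat" where
  "gdist E u v = (LEAST n. walk E n u v)"

definition ball_g :: "'a set \<Rightarrow> ('a \<Rightarrow> 'a \<Rightarrow> bool) \<Rightarrow> 'a \<Rightarrow> nat \<Rightarrow> 'a set" where
  "ball_g V E s r = {u \<in> V. \<exists>n\<le>r. walk E n u s}"

datatype arrow = Up | Down

text \<open>Configuration: distances d, error bits err (True = 1), clocks c i u in Z/4Z, arrows b i u.\<close>
record 'a config =
  dd  :: "'a \<Rightarrow> nat"
  err :: "'a \<Rightarrow> bool"
  clk :: "nat \<Rightarrow> 'a \<Rightarrow> 4"
  arr :: "nat \<Rightarrow> 'a \<Rightarrow> arrow"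

definition is_config :: "'a set \<Rightarrow> nat \<Rightarrow> 'a config \<Rightarrow> bool" where
  "is_config V k C \<longleftrightarrow> (\<forall>u\<in>V. dd C u < k)"

definition S_set :: "'a set \<Rightarrow> 'a config \<Rightarrow> 'a set" where
  "S_set V C = {u \<in> V. dd C u = 0}"

definition well_defined :: "('a \<Rightarrow> 'a \<Rightarrow> bool) \<Rightarrow> 'a config \<Rightarrow> 'a \<Rightarrow> bool" where
  "well_defined E C u \<longleftrightarrow> \<not> err C u
     \<and> (\<forall>v\<in>nbrs E u. \<bar>int (dd C u) - int (dd C v)\<bar> \<le> 1)
     \<and> (dd C u > 0 \<longrightarrow> (\<exists>v\<in>nbrs E u. int (dd C v) = int (dd C u) - 1))"

definition leader_down :: "nat \<Rightarrow> 'a config \<Rightarrow> 'a \<Rightarrow> bool" where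
  "leader_down m C u \<longleftrightarrow> (dd C u = 0 \<longrightarrow> (\<forall>i\<in>{1..<m}. arr C i u = Down))"

definition bc_up :: "('a \<Rightarrow> 'a \<Rightarrow> bool) \<Rightarrow> 'a config \<Rightarrow> 'a \<Rightarrow> nat \<Rightarrow> bool" where
  "bc_up E C u i \<longleftrightarrow> (\<forall>v\<in>nbrs E u. int (dd C v) = int (dd C u) - 1 \<longrightarrow>
      (arr C i u, arr C i v, clk C i v) \<in>
        {(Up, Up, clk C i u), (Up, Down, clk C i u), (Up, Down, clk C i u + 1),
         (Down, Down, clk C i u)})"

definition bc_down :: "('a \<Rightarrow> 'a \<Rightarrow> bool) \<Rightarrow> 'a config \<Rightarrow> 'a \<Rightarrow> nat \<Rightarrow> bool" where
  "bc_down E C u i \<longleftrightarrow> (\<forall>v\<in>nbrs E u. int (dd C v) = int (dd C u) + 1 \<longrightarrow>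
      (arr C i u, arr C i v, clk C i v) \<in>
        {(Up, Up, clk C i u), (Down, Up, clk C i u), (Down, Up, clk C i u - 1),
         (Down, Down, clk C i u)})"

definition branch_coherence :: "nat \<Rightarrow> ('a \<Rightarrow> 'a \<Rightarrow> bool) \<Rightarrow> 'a config \<Rightarrow> 'a \<Rightarrow> bool" where
  "branch_coherence m E C u \<longleftrightarrow> dd C u \<ge> m \<or>
     (bc_up E C u (dd C u) \<and>
      (\<forall>i\<in>{dd C u + 1..<m}. bc_up E C u i \<and> bc_down E C u i))"

definition locally_legitimate ::
  "'a set \<Rightarrow> ('a \<Rightarrow> 'a \<Rightarrow> bool) \<Rightarrow> nat \<Rightarrow> 'a config \<Rightarrow> 'a \<Rightarrow> bool" where
  "locally_legitimate V E k C s \<longleftrightarrow> s \<in> S_set V C \<and>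
     (let m = k div 2 in
       (\<forall>u\<in>ball_g V E s m. well_defined E C u \<and> leader_down m C u
           \<and> branch_coherence m E C u \<and> dd C u = gdist E u s)
     \<and> (\<forall>u\<in>ball_g V E s (k - 1) - ball_g V E s m.
           k - gdist E u s \<le> dd C u \<and> dd C u \<le> gdist E u s))"

end

theory Submission
  imports Defs
begin

(* Near s the legitimate distances are exact, so d_u = 0 forces dist(u,s) = 0, i.e. u = s;
   further out, within distance k - 1, condition (2) gives d_u >= k - dist(u,s) >= 1. *)

lemma gdist_le: "walk E n u v \<Longrightarrow> gdist E u v \<le> n"
  unfolding gdist_def by (rule Least_le)

lemma walk_gdist: "walk E n u v \<Longrightarrow> walk E (gdist E u v) u v"
  unfolding gdist_def by (rule LeastI)

lemma gdist_eq_0_iff: "walk E n u v \<Longrightarrow> gdist E u v = 0 \<longleftrightarrow> u = v"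
  using walk_gdist[of E n u v] gdist_le[of E 0 v v] by auto

lemma mem_ball_g_iff_gdist:
  "u \<in> ball_g V E s r \<longleftrightarrow> u \<in> V \<and> (\<exists>n. walk E n u s) \<and> gdist E u s \<le> r"
  unfolding ball_g_def by (blast intro: walk_gdist dest: gdist_le order_trans)

lemma locally_legitimate_zero_imp_eq:
  assumes legit: "locally_legitimate V E k C s"
    and u: "u \<in> ball_g V E s (k - 1)" and d0: "dd C u = 0"
  shows "u = s"
proof (cases "u \<in> ball_g V E s (k div 2)")
  case True
  with legit have "dd C u = gdist E u s"
    by (simp add: locally_legitimate_def Let_def)
  with u d0 show ?thesis
    by (auto simp: mem_ball_g_iff_gdist gdist_eq_0_iff)
next
  case False
  with legit u have "k - gdist E u s \<le> dd C u"
    by (simp add: locally_legitimate_def Let_def)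
  with u d0 False show ?thesis
    by (auto simp: mem_ball_g_iff_gdist)
qed

theorem lemma5:
  fixes V :: "'a set" and E :: "'a \<Rightarrow> 'a \<Rightarrow> bool" and k :: nat and C :: "'a config" and s :: 'a
  assumes "ugraph V E"
    and "k > 2"
    and "is_config V k C"
    and "s \<in> S_set V C"
    and "locally_legitimate V E k C s"
  shows "ball_g V E s (k - 1) \<inter> S_set V C = {s}"
proof
  show "{s} \<subseteq> ball_g V E s (k - 1) \<inter> S_set V C"
    using assms(4) by (auto simp: ball_g_def S_set_def intro: exI[of _ 0])
  show "ball_g V E s (k - 1) \<inter> S_set V C \<subseteq> {s}"
    using locally_legitimate_zero_imp_eq[OF assms(5)] by (auto simp: S_set_def)
qed

end
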